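(* Let $a_i,b_i,a'_i,b'_i\ge 0$ ($i=1,2$), $v_1=(a'_1-a_1,b'_1-b_1)$, $v_2=(a'_2-a_2,b'_2-b_2)$, with $-1<\frac{b'_1-b_1}{a'_1-a_1}<0$ and $\frac{b'_2-b_2}{a'_2-a_2}<-1$. For $\epsilon\in(0,1)$ let $A(\epsilon)\in\mathbb{R}^2_{>0}$ be the intersection point of the curves $x^{a'_1-a_1}y^{b'_1-b_1}=\epsilon^2$ and $x^{a'_2-a_2}y^{b'_2-b_2}=\epsilon^{-2}$, and let $J(\epsilon)$ be the Jacobian matrix at $A(\epsilon)$ of the vector field $$F_\epsilon(x,y)=\big(\epsilon x^{a_1}y^{b_1}-\tfrac1\epsilon x^{a'_1}y^{b'_1}\big)v_1+\big(\tfrac1\epsilon x^{a_2}y^{b_2}-\epsilon x^{a'_2}y^{b'_2}\big)v_2$$ (the system followed by the trajectory from $D(\epsilon)=\{x^{a'_1-a_1}y^{b'_1-b_1}=\epsilon^2\}\cap\{x^{a'_2-a_2}y^{b'_2-b_2}=\epsilon^{2}\}$ to $A(\epsilon)$). Then, as $\epsilon$ varies, $J(\epsilon)$ has equal eigenvalues for at most finitely many values of $\epsilon$.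
   Context: $F_\epsilon$ is the mass-action vector field of the network $a_1X+b_1Y\rightleftharpoons a'_1X+b'_1Y$, $a_2X+b_2Y\rightleftharpoons a'_2X+b'_2Y$ with constant rate constants $k_1=\epsilon,k_2=1/\epsilon,k_3=1/\epsilon,k_4=\epsilon$; $A(\epsilon)$ is its (detailed balanced) positive equilibrium. *)

theory Defs
  imports "HOL-Analysis.Analysis"
begin

text \<open>Mass-action vector field of the network
  a1 X + b1 Y <=> a1' X + b1' Y,  a2 X + b2 Y <=> a2' X + b2' Y
  with rate constants k1 = e, k2 = 1/e, k3 = 1/e, k4 = e.\<close>
definition F_eps ::
  "real \<Rightarrow> real \<Rightarrow> real \<Rightarrow> real \<Rightarrow> real \<Rightarrow> real \<Rightarrow> real \<Rightarrow> real \<Rightarrow> real \<Rightarrow> real^2 \<Rightarrow> real^2" where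
  "F_eps a1 b1 a1' b1' a2 b2 a2' b2' e p =
     (e * (p$1) powr a1 * (p$2) powr b1 - (1/e) * (p$1) powr a1' * (p$2) powr b1')
        *\<^sub>R vector [a1' - a1, b1' - b1]
   + ((1/e) * (p$1) powr a2 * (p$2) powr b2 - e * (p$1) powr a2' * (p$2) powr b2')
        *\<^sub>R vector [a2' - a2, b2' - b2]"

definition jacobian :: "(real^2 \<Rightarrow> real^2) \<Rightarrow> real^2 \<Rightarrow> real^2^2" where
  "jacobian F p = matrix (frechet_derivative F (at p))"

text \<open>A 2x2 real matrix has equal eigenvalues iff its characteristic polynomial
  det(t I - M) is a perfect square (t - lambda)^2 (the double root is necessarily real).\<close>
definition equal_eigenvalues :: "real^2^2 \<Rightarrow> bool" where
  "equal_eigenvalues M \<longleftrightarrow> (\<exists>l::real. \<forall>t::real. det (mat t - M) = (t - l)^2)"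

end

theory Submission
  imports Defs
begin

(* At the detailed balanced equilibrium p = (x, y) each reaction pair has equal forward and
   backward rates w_1, w_2 > 0, so the Jacobian there is
   -(w_1 v_1 v_1^T + w_2 v_2 v_2^T) diag(1/x, 1/y).
   Its off-diagonal entries are -S/y and -S/x with S = w_1 v_11 v_12 + w_2 v_21 v_22, and the slope
   hypotheses make both summands of S negative. Hence the off-diagonal entries have a positive
   product, the discriminant of the characteristic polynomial is positive, and the eigenvalues are
   never equal: the set in question is empty. *)

lemma equal_eigenvalues_iff_discriminant:
  fixes M :: "real^2^2"
  shows "equal_eigenvalues M \<longleftrightarrow> (M$1$1 - M$2$2)^2 + 4 * (M$1$2 * M$2$1) = 0"
proof
  assume "equal_eigenvalues M"
  then obtain l where l: "\<And>t. det (mat t - M) = (t - l)^2"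
    unfolding equal_eigenvalues_def by blast
  have det0: "M$1$1 * M$2$2 - M$1$2 * M$2$1 = l^2"
    using l[of 0] by (simp add: det_2 mat_def power2_eq_square)
  have "(1 - M$1$1) * (1 - M$2$2) - M$1$2 * M$2$1 = (1 - l)^2"
    using l[of 1] by (simp add: det_2 mat_def)
  then have trace: "M$1$1 + M$2$2 = 2 * l"
    using det0 by (simp add: algebra_simps power2_eq_square)
  have "(M$1$1 - M$2$2)^2 + 4 * (M$1$2 * M$2$1)
          = (M$1$1 + M$2$2)^2 - 4 * (M$1$1 * M$2$2 - M$1$2 * M$2$1)"
    by (simp add: power2_eq_square algebra_simps)
  then show "(M$1$1 - M$2$2)^2 + 4 * (M$1$2 * M$2$1) = 0"
    using det0 trace by (simp add: power2_eq_square)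
next
  assume disc: "(M$1$1 - M$2$2)^2 + 4 * (M$1$2 * M$2$1) = 0"
  have "det (mat t - M) = (t - (M$1$1 + M$2$2) / 2)^2" for t
  proof -
    have "det (mat t - M) = (t - M$1$1) * (t - M$2$2) - M$1$2 * M$2$1"
      by (simp add: det_2 mat_def)
    also have "\<dots> = (t - (M$1$1 + M$2$2) / 2)^2"
      using disc by (simp add: power2_eq_square field_simps)
    finally show ?thesis .
  qed
  then show "equal_eigenvalues M"
    unfolding equal_eigenvalues_def by blast
qed

lemma has_derivative_monomial:
  fixes p :: "real^2"
  assumes "p$1 > 0" "p$2 > 0"
  shows "((\<lambda>q. (q$1) powr a * (q$2) powr b) has_derivative
           (\<lambda>h. ((p$1) powr a * (p$2) powr b) * (a * h$1 / p$1 + b * h$2 / p$2))) (at p)"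
proof -
  have coord: "((\<lambda>q::real^2. q$i) has_derivative (\<lambda>h. h$i)) (at p)" for i
    by (rule bounded_linear_imp_has_derivative) (rule bounded_linear_vec_nth)
  show ?thesis
    apply (rule derivative_eq_intros coord | simp add: assms)+
    apply (simp add: assms field_simps)
    done
qed

lemma has_derivative_balanced_rate:
  fixes p :: "real^2"
  assumes "p$1 > 0" "p$2 > 0"
    and forward: "k * (p$1) powr a * (p$2) powr b = w"
    and backward: "k' * (p$1) powr a' * (p$2) powr b' = w"
  shows "((\<lambda>q. k * (q$1) powr a * (q$2) powr b - k' * (q$1) powr a' * (q$2) powr b')
           has_derivative (\<lambda>h. - w * ((a' - a) * h$1 / p$1 + (b' - b) * h$2 / p$2))) (at p)"
proof -
  have "((\<lambda>q. k * ((q$1) powr a * (q$2) powr b) - k' * ((q$1) powr a' * (q$2) powr b'))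
          has_derivative
            (\<lambda>h. k * ((p$1) powr a * (p$2) powr b) * (a * h$1 / p$1 + b * h$2 / p$2)
               - k' * ((p$1) powr a' * (p$2) powr b') * (a' * h$1 / p$1 + b' * h$2 / p$2))) (at p)"
    unfolding mult.assoc[of k] mult.assoc[of k']
    by (intro has_derivative_diff has_derivative_mult_right has_derivative_monomial assms(1,2))
  then show ?thesis
    unfolding mult.assoc[symmetric] forward backward
    by (simp add: algebra_simps diff_divide_distrib)
qed

lemma jacobian_F_eps_at_balanced_point:
  fixes p :: "real^2"
  assumes "p$1 > 0" "p$2 > 0"
    and "e * (p$1) powr a1 * (p$2) powr b1 = w1" "(1/e) * (p$1) powr a1' * (p$2) powr b1' = w1"
    and "(1/e) * (p$1) powr a2 * (p$2) powr b2 = w2" "e * (p$1) powr a2' * (p$2) powr b2' = w2"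
  shows "jacobian (F_eps a1 b1 a1' b1' a2 b2 a2' b2' e) p $ i $ j =
           - (w1 * vector [a1' - a1, b1' - b1] $ i * vector [a1' - a1, b1' - b1] $ j
              + w2 * vector [a2' - a2, b2' - b2] $ i * vector [a2' - a2, b2' - b2] $ j) / p$j"
proof -
  let ?v1 = "vector [a1' - a1, b1' - b1] :: real^2"
  let ?v2 = "vector [a2' - a2, b2' - b2] :: real^2"
  let ?L = "\<lambda>h. (- w1 * ((a1' - a1) * h$1 / p$1 + (b1' - b1) * h$2 / p$2)) *\<^sub>R ?v1
              + (- w2 * ((a2' - a2) * h$1 / p$1 + (b2' - b2) * h$2 / p$2)) *\<^sub>R ?v2"
  have "(F_eps a1 b1 a1' b1' a2 b2 a2' b2' e has_derivative ?L) (at p)"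
    unfolding F_eps_def
    by (intro has_derivative_add has_derivative_scaleR_left has_derivative_balanced_rate assms)
  then have "jacobian (F_eps a1 b1 a1' b1' a2 b2 a2' b2' e) p $ i $ j = ?L (axis j 1) $ i"
    unfolding jacobian_def matrix_def by (simp add: frechet_derivative_at[symmetric])
  also have "\<dots> = - (w1 * ?v1 $ i * ?v1 $ j + w2 * ?v2 $ i * ?v2 $ j) / p$j"
    using exhaust_2[of i] exhaust_2[of j] assms(1,2) by (auto simp: axis_def field_simps)
  finally show ?thesis .
qed

lemma monomial_ratio_eq:
  fixes x y a b a' b' c :: real
  assumes "x > 0" "y > 0" "x powr (a' - a) * y powr (b' - b) = c"
  shows "x powr a' * y powr b' = c * (x powr a * y powr b)"
proof -
  have "x powr a' = x powr (a' - a) * x powr a" "y powr b' = y powr (b' - b) * y powr b"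
    using assms(1,2) by (simp_all add: powr_diff)
  then show ?thesis
    using assms(3) by (simp add: algebra_simps)
qed

lemma mult_neg_if_divide_neg:
  fixes a b :: "'a :: linordered_field"
  assumes "b / a < 0"
  shows "a * b < 0"
  using assms by (auto simp: divide_less_0_iff mult_less_0_iff)

lemma not_equal_eigenvalues_jacobian_F_eps_at_balanced_point:
  fixes p :: "real^2"
  assumes x: "p$1 > 0" and y: "p$2 > 0"
    and balance1: "e * (p$1) powr a1 * (p$2) powr b1 = w1"
                  "(1/e) * (p$1) powr a1' * (p$2) powr b1' = w1"
    and balance2: "(1/e) * (p$1) powr a2 * (p$2) powr b2 = w2"
                  "e * (p$1) powr a2' * (p$2) powr b2' = w2"
    and rates_pos: "w1 > 0" "w2 > 0"
    and slopes_neg: "(a1' - a1) * (b1' - b1) < 0" "(a2' - a2) * (b2' - b2) < 0"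
  shows "\<not> equal_eigenvalues (jacobian (F_eps a1 b1 a1' b1' a2 b2 a2' b2' e) p)"
proof
  define S where "S = w1 * ((a1' - a1) * (b1' - b1)) + w2 * ((a2' - a2) * (b2' - b2))"
  have "S < 0"
    unfolding S_def using rates_pos slopes_neg by (smt (verit) mult_pos_neg)
  let ?J = "jacobian (F_eps a1 b1 a1' b1' a2 b2 a2' b2' e) p"
  have "?J $ 1 $ 2 = - S / p$2" "?J $ 2 $ 1 = - S / p$1"
    using jacobian_F_eps_at_balanced_point[OF x y balance1 balance2]
    by (simp_all add: S_def algebra_simps)
  then have "?J $ 1 $ 2 * ?J $ 2 $ 1 > 0"
    using \<open>S < 0\<close> x y by (simp add: mult_neg_neg)
  moreover assume "equal_eigenvalues ?J"
  ultimately show False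
    unfolding equal_eigenvalues_iff_discriminant by (smt (verit) zero_le_power2)
qed

theorem proposition4p9:
  fixes a1 b1 a1' b1' a2 b2 a2' b2' :: real
    and A :: "real \<Rightarrow> real^2"
  assumes nonneg: "a1 \<ge> 0" "b1 \<ge> 0" "a1' \<ge> 0" "b1' \<ge> 0"
                  "a2 \<ge> 0" "b2 \<ge> 0" "a2' \<ge> 0" "b2' \<ge> 0"
    and slope1: "-1 < (b1' - b1) / (a1' - a1)" "(b1' - b1) / (a1' - a1) < 0"
    and slope2: "(b2' - b2) / (a2' - a2) < -1"
    and A_pos: "\<And>e. 0 < e \<Longrightarrow> e < 1 \<Longrightarrow> A e $ 1 > 0 \<and> A e $ 2 > 0"
    and A_curve1: "\<And>e. 0 < e \<Longrightarrow> e < 1 \<Longrightarrow>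
        (A e $ 1) powr (a1' - a1) * (A e $ 2) powr (b1' - b1) = e^2"
    and A_curve2: "\<And>e. 0 < e \<Longrightarrow> e < 1 \<Longrightarrow>
        (A e $ 1) powr (a2' - a2) * (A e $ 2) powr (b2' - b2) = 1 / e^2"
  shows "finite {e \<in> {0<..<1}.
           equal_eigenvalues (jacobian (F_eps a1 b1 a1' b1' a2 b2 a2' b2' e) (A e))}"
proof -
  have "\<not> equal_eigenvalues (jacobian (F_eps a1 b1 a1' b1' a2 b2 a2' b2' e) (A e))"
    if e: "0 < e" "e < 1" for e
  proof -
    define x y where "x = A e $ 1" and "y = A e $ 2"
    have x: "x > 0" and y: "y > 0"
      using A_pos[OF e] by (simp_all add: x_def y_def)
    have "x powr a1' * y powr b1' = e^2 * (x powr a1 * y powr b1)"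
      by (rule monomial_ratio_eq[OF x y A_curve1[OF e, folded x_def y_def]])
    moreover have "x powr a2' * y powr b2' = 1 / e^2 * (x powr a2 * y powr b2)"
      by (rule monomial_ratio_eq[OF x y A_curve2[OF e, folded x_def y_def]])
    ultimately have "(1/e) * x powr a1' * y powr b1' = e * x powr a1 * y powr b1"
                    "e * x powr a2' * y powr b2' = (1/e) * x powr a2 * y powr b2"
      using e by (simp_all add: power2_eq_square mult.assoc)
    moreover have "e * x powr a1 * y powr b1 > 0" "(1/e) * x powr a2 * y powr b2 > 0"
      using x y e by simp_all
    moreover have "(a1' - a1) * (b1' - b1) < 0" "(a2' - a2) * (b2' - b2) < 0"
      using slope1(2) slope2 by (simp_all add: mult_neg_if_divide_neg)
    ultimately show ?thesis
      using not_equal_eigenvalues_jacobian_F_eps_at_balanced_point[where p = "A e",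
          folded x_def y_def, OF x y refl _ refl]
      by blast
  qed
  then have "{e \<in> {0<..<1}.
      equal_eigenvalues (jacobian (F_eps a1 b1 a1' b1' a2 b2 a2' b2' e) (A e))} = {}"
    by auto
  then show ?thesis
    by (simp only: finite.emptyI)
qed

end
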